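(* Let $g_1,\dots,g_N\in\mathbb{C}^K$ be nonzero vectors and $w_1,\dots,w_N\ge0$. Define for $\mathcal{S}\subseteq\mathcal{N}=\{1,\dots,N\}$ $$\mathrm{WFP}(\mathcal{S})=\sum_{i,j\in\mathcal{S}}w_iw_j\frac{|\langle g_i,g_j\rangle|^2}{\|g_i\|_2^2\|g_j\|_2^2},\qquad \mathrm{WFC}(\mathcal{T})=\mathrm{WFP}(\mathcal{N})-\mathrm{WFP}(\mathcal{N}\setminus\mathcal{T}).$$ Then $\mathrm{WFC}$ is normalized ($\mathrm{WFC}(\varnothing)=0$), monotone non-decreasing ($\mathcal{S}_1\subseteq\mathcal{S}_2\Rightarrow\mathrm{WFC}(\mathcal{S}_1)\le\mathrm{WFC}(\mathcal{S}_2)$), and submodular ($\mathrm{WFC}(\mathcal{S}_2\cup\{j\})-\mathrm{WFC}(\mathcal{S}_2)\le\mathrm{WFC}(\mathcal{S}_1\cup\{j\})-\mathrm{WFC}(\mathcal{S}_1)$ for all $\mathcal{S}_1\subseteq\mathcal{S}_2\subseteq\mathcal{N}$ and $j\in\mathcal{N}\setminus\mathcal{S}_2$).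
   Context: In the paper $g_i=\nabla_{\mathbf{x}}y_i$ is the gradient of the $i$-th measurement with respect to the unknown parameter vector (the $i$-th row of the measurement matrix in the linear case), and $w_i=\phi(\sigma_i)\in[0,1]$ is a weight depending on the noise level of sensor $i$. $\langle\cdot,\cdot\rangle$ is the standard inner product on $\mathbb{C}^K$. *)

theory Defs
  imports "HOL-Analysis.Analysis"
begin

definition cinner :: "complex ^ 'k \<Rightarrow> complex ^ 'k \<Rightarrow> complex" where
  "cinner x y = (\<Sum>k\<in>UNIV. x $ k * cnj (y $ k))"

definition WFP :: "(nat \<Rightarrow> complex ^ 'k) \<Rightarrow> (nat \<Rightarrow> real) \<Rightarrow> nat set \<Rightarrow> real" where
  "WFP g w S = (\<Sum>i\<in>S. \<Sum>j\<in>S. w i * w j *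
      (cmod (cinner (g i) (g j)))\<^sup>2 / ((norm (g i))\<^sup>2 * (norm (g j))\<^sup>2))"

definition WFC :: "nat \<Rightarrow> (nat \<Rightarrow> complex ^ 'k) \<Rightarrow> (nat \<Rightarrow> real) \<Rightarrow> nat set \<Rightarrow> real" where
  "WFC N g w T = WFP g w {1..N} - WFP g w ({1..N} - T)"

end

theory Submission
  imports Defs
begin

text \<open>WFP is the double sum over a set of a nonnegative kernel, and any such sum is monotone and
  supermodular: adding an element j to a set B adds the entries of row and column j over B.
  Passing to complements turns this into monotonicity and submodularity of WFC.\<close>

definition pair_sum :: "('a \<Rightarrow> 'a \<Rightarrow> 'b::comm_monoid_add) \<Rightarrow> 'a set \<Rightarrow> 'b" where
  "pair_sum c A = (\<Sum>i\<in>A. \<Sum>k\<in>A. c i k)"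

lemma pair_sum_insert:
  fixes c :: "'a \<Rightarrow> 'a \<Rightarrow> 'b::comm_monoid_add"
  assumes "finite B" "j \<notin> B"
  shows "pair_sum c (insert j B) = pair_sum c B + c j j + (\<Sum>i\<in>B. c j i + c i j)"
  using assms by (simp add: pair_sum_def sum.distrib algebra_simps)

lemma pair_sum_mono:
  fixes c :: "'a \<Rightarrow> 'a \<Rightarrow> 'b::ordered_comm_monoid_add"
  assumes "finite A" "B \<subseteq> A" and nonneg: "\<And>i k. i \<in> A \<Longrightarrow> k \<in> A \<Longrightarrow> c i k \<ge> 0"
  shows "pair_sum c B \<le> pair_sum c A"
proof -
  have "pair_sum c B \<le> (\<Sum>i\<in>B. \<Sum>k\<in>A. c i k)"
    unfolding pair_sum_def
    by (rule sum_mono, rule sum_mono2) (use assms finite_subset in auto)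
  also have "\<dots> \<le> pair_sum c A"
    unfolding pair_sum_def by (rule sum_mono2) (use assms in \<open>auto intro!: sum_nonneg\<close>)
  finally show ?thesis .
qed

lemma pair_sum_supermodular:
  fixes c :: "'a \<Rightarrow> 'a \<Rightarrow> 'b::ordered_ab_group_add"
  assumes "finite A" "B \<subseteq> A" "j \<notin> A"
    and nonneg: "\<And>i k. i \<in> insert j A \<Longrightarrow> k \<in> insert j A \<Longrightarrow> c i k \<ge> 0"
  shows "pair_sum c (insert j B) - pair_sum c B \<le> pair_sum c (insert j A) - pair_sum c A"
proof -
  have "(\<Sum>i\<in>B. c j i + c i j) \<le> (\<Sum>i\<in>A. c j i + c i j)"
    by (rule sum_mono2) (use assms in \<open>auto intro!: add_nonneg_nonneg\<close>)
  moreover have "finite B" "j \<notin> B" using assms finite_subset by auto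
  ultimately show ?thesis using assms by (simp add: pair_sum_insert)
qed

lemma pair_sum_complement_mono:
  fixes c :: "'a \<Rightarrow> 'a \<Rightarrow> 'b::ordered_ab_group_add"
  assumes "finite U" "S1 \<subseteq> S2" and nonneg: "\<And>i k. i \<in> U \<Longrightarrow> k \<in> U \<Longrightarrow> c i k \<ge> 0"
  shows "pair_sum c U - pair_sum c (U - S1) \<le> pair_sum c U - pair_sum c (U - S2)"
  using pair_sum_mono[of "U - S1" "U - S2" c] assms by auto

lemma pair_sum_complement_submodular:
  fixes c :: "'a \<Rightarrow> 'a \<Rightarrow> 'b::ordered_ab_group_add"
  assumes "finite U" "S1 \<subseteq> S2" "j \<in> U - S2"
    and nonneg: "\<And>i k. i \<in> U \<Longrightarrow> k \<in> U \<Longrightarrow> c i k \<ge> 0"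
  defines "f \<equiv> \<lambda>T. pair_sum c U - pair_sum c (U - T)"
  shows "f (S2 \<union> {j}) - f S2 \<le> f (S1 \<union> {j}) - f S1"
proof -
  have gain: "f (S \<union> {j}) - f S = pair_sum c (insert j (U - S - {j})) - pair_sum c (U - S - {j})"
    if "j \<in> U - S" for S
  proof -
    have "insert j (U - S - {j}) = U - S" using that by auto
    moreover have "U - (S \<union> {j}) = U - S - {j}" by auto
    ultimately show ?thesis unfolding f_def by (simp add: algebra_simps)
  qed
  have "pair_sum c (insert j (U - S2 - {j})) - pair_sum c (U - S2 - {j})
      \<le> pair_sum c (insert j (U - S1 - {j})) - pair_sum c (U - S1 - {j})"
    by (rule pair_sum_supermodular) (use assms in auto)
  moreover have "j \<in> U - S1" using assms by auto
  ultimately show ?thesis by (simp only: gain[OF \<open>j \<in> U - S2\<close>] gain[OF \<open>j \<in> U - S1\<close>])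
qed

lemma WFP_eq_pair_sum:
  "WFP g w = pair_sum (\<lambda>i k. w i * w k *
      (cmod (cinner (g i) (g k)))\<^sup>2 / ((norm (g i))\<^sup>2 * (norm (g k))\<^sup>2))"
  by (simp add: fun_eq_iff WFP_def pair_sum_def)

theorem mainTheorem6:
  fixes N :: nat and g :: "nat \<Rightarrow> complex ^ 'k" and w :: "nat \<Rightarrow> real"
  assumes g_nz: "\<And>i. i \<in> {1..N} \<Longrightarrow> g i \<noteq> 0"
    and w_nn: "\<And>i. i \<in> {1..N} \<Longrightarrow> w i \<ge> 0"
  shows "WFC N g w {} = 0
    \<and> (\<forall>S1 S2. S1 \<subseteq> S2 \<and> S2 \<subseteq> {1..N} \<longrightarrow> WFC N g w S1 \<le> WFC N g w S2)
    \<and> (\<forall>S1 S2 j. S1 \<subseteq> S2 \<and> S2 \<subseteq> {1..N} \<and> j \<in> {1..N} - S2 \<longrightarrow>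
         WFC N g w (S2 \<union> {j}) - WFC N g w S2 \<le> WFC N g w (S1 \<union> {j}) - WFC N g w S1)"
proof -
  define c where "c = (\<lambda>i k. w i * w k *
      (cmod (cinner (g i) (g k)))\<^sup>2 / ((norm (g i))\<^sup>2 * (norm (g k))\<^sup>2))"
  have WFC_eq: "WFC N g w = (\<lambda>T. pair_sum c {1..N} - pair_sum c ({1..N} - T))"
    by (simp add: fun_eq_iff WFC_def WFP_eq_pair_sum c_def)
  have c_nonneg: "c i k \<ge> 0" if "i \<in> {1..N}" "k \<in> {1..N}" for i k
    unfolding c_def using w_nn[OF that(1)] w_nn[OF that(2)] by simp
  show ?thesis
    unfolding WFC_eq
    using pair_sum_complement_mono[of "{1..N}" _ _ c]
      pair_sum_complement_submodular[of "{1..N}" _ _ _ c] c_nonneg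
    by auto
qed

end
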